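(* For every positive integer $\alpha$, there is no function $f$ such that $\mathrm{ecrw}_\alpha(G)\le f(\mathrm{tcw}(G))$ for all graphs $G$. (Indeed, for every $k$ the graph $G^{\alpha+1}_k$ has tree-cut width at most $\alpha+1$, while $\{G^{\alpha+1}_k:k\in\mathbb N\}$ has unbounded $\alpha$-edge-crossing width.)
   Context: For positive integers $n,k$, the graph $G^n_k$ has vertex set $A\cup B_k$ where $A=\{a_1,\dots,a_n\}$ and $B_k=\{(W,\ell): W\subseteq A,\ |W|=2,\ \ell\in[k]\}$, with $a\in A$ adjacent to $(W,\ell)$ iff $a\in W$, and no other edges. A tree-cut decomposition of a graph $G$ is a pair $\mathcal{T}=(T,\{X_t\}_{t\in V(T)})$ where $T$ is a tree and the bags $X_t\subseteq V(G)$ are pairwise disjoint (possibly empty) with $\bigcup_{t\in V(T)}X_t=V(G)$. For a node $t$ of $T$, let $T_1,\dots,T_m$ be the connected components of $T-t$ and $Z_i=\bigcup_{s\in V(T_i)}X_s$; $\mathrm{cross}_{\mathcal{T}}(t)$ is the number of edges of $G$ whose two endpoints lie in two distinct sets among $Z_1,\dots,Z_m$ (if $T$ has one node, $\mathrm{cross}_{\mathcal T}(t)=0$). The crossing number of $\mathcal{T}$ is $\max_{t}\mathrm{cross}_{\mathcal{T}}(t)$, and the thickness of $\mathcal{T}$ is $\max_t|X_t|$. $\mathrm{ecrw}_\alpha(G)$ is the minimum crossing number over tree-cut decompositions of $G$ of thickness at most $\alpha$. For an edge $uv$ of $T$, the adhesion $\mathrm{adh}_{\mathcal T}(uv)$ is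 the set of edges of $G$ joining $\bigcup_{s\in V(T_{uv,u})}X_s$ and $\bigcup_{s\in V(T_{uv,v})}X_s$, where $T_{uv,u},T_{uv,v}$ are the components of $T-uv$ containing $u,v$. The torso $H_t$ at $t$ is $G$ if $|V(T)|=1$, and otherwise is obtained from $G$ by consolidating each $Z_i$ into a single vertex $z_i$ (replace $Z_i$ by $z_i$ and, for each edge between $Z_i$ and $v\notin Z_i$, add an edge $z_iv$; multi-edges allowed). The 3-center $\widetilde{H_t}$ is obtained from $H_t$ by exhaustively suppressing vertices of $V(H_t)\setminus X_t$ of degree at most 2 (suppressing $v$: delete $v$, and if it had degree exactly 2 add an edge between its two neighbours). The tree-cut width of $\mathcal T$ is $\max(\max_{uv\in E(T)}|\mathrm{adh}_{\mathcal T}(uv)|,\max_{t}|V(\widetilde{H_t})|)$, and $\mathrm{tcw}(G)$ is its minimum over all tree-cut decompositions of $G$. *)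

theory Defs
  imports Main "HOL-Library.Multiset"
begin

definition graph :: "nat set \<Rightarrow> nat set set \<Rightarrow> bool" where
  "graph V E \<longleftrightarrow> finite V \<and> (\<forall>e\<in>E. e \<subseteq> V \<and> card e = 2)"

definition tadj :: "nat set set \<Rightarrow> (nat \<times> nat) set" where
  "tadj TE = {(a, b). {a, b} \<in> TE}"

definition is_tree :: "nat set \<Rightarrow> nat set set \<Rightarrow> bool" where
  "is_tree N TE \<longleftrightarrow> finite N \<and> N \<noteq> {} \<and> (\<forall>e\<in>TE. e \<subseteq> N \<and> card e = 2)
     \<and> (\<forall>u\<in>N. \<forall>v\<in>N. (u, v) \<in> (tadj TE)\<^sup>*) \<and> card TE + 1 = card N"

definition conn_avoid :: "nat set set \<Rightarrow> nat \<Rightarrow> nat \<Rightarrow> nat \<Rightarrow> bool" where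
  "conn_avoid TE t a b \<longleftrightarrow> (a, b) \<in> {(x, y). {x, y} \<in> TE \<and> x \<noteq> t \<and> y \<noteq> t}\<^sup>*"

definition conn_avoid_edge :: "nat set set \<Rightarrow> nat set \<Rightarrow> nat \<Rightarrow> nat \<Rightarrow> bool" where
  "conn_avoid_edge TE e a b \<longleftrightarrow> (a, b) \<in> (tadj (TE - {e}))\<^sup>*"

definition tcd :: "nat set \<Rightarrow> nat set set \<Rightarrow> nat set \<Rightarrow> nat set set \<Rightarrow> (nat \<Rightarrow> nat set) \<Rightarrow> bool" where
  "tcd V E N TE X \<longleftrightarrow> is_tree N TE
     \<and> (\<forall>s\<in>N. \<forall>s'\<in>N. s \<noteq> s' \<longrightarrow> X s \<inter> X s' = {})
     \<and> (\<Union>s\<in>N. X s) = V"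

definition node_of :: "nat set \<Rightarrow> (nat \<Rightarrow> nat set) \<Rightarrow> nat \<Rightarrow> nat" where
  "node_of N X v = (THE s. s \<in> N \<and> v \<in> X s)"

definition cross :: "nat set set \<Rightarrow> nat set \<Rightarrow> nat set set \<Rightarrow> (nat \<Rightarrow> nat set) \<Rightarrow> nat \<Rightarrow> nat" where
  "cross E N TE X t = card {e \<in> E. \<exists>u v. e = {u, v} \<and> node_of N X u \<noteq> t \<and> node_of N X v \<noteq> t
        \<and> \<not> conn_avoid TE t (node_of N X u) (node_of N X v)}"

definition crossing_number :: "nat set set \<Rightarrow> nat set \<Rightarrow> nat set set \<Rightarrow> (nat \<Rightarrow> nat set) \<Rightarrow> nat" where
  "crossing_number E N TE X = Max (cross E N TE X ` N)"

definition thickness :: "nat set \<Rightarrow> (nat \<Rightarrow> nat set) \<Rightarrow> nat" where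
  "thickness N X = Max ((\<lambda>s. card (X s)) ` N)"

definition ecrw :: "nat \<Rightarrow> nat set \<Rightarrow> nat set set \<Rightarrow> nat" where
  "ecrw \<alpha> V E = Inf {c. \<exists>N TE X. tcd V E N TE X \<and> thickness N X \<le> \<alpha> \<and> c = crossing_number E N TE X}"

definition adh :: "nat set set \<Rightarrow> nat set \<Rightarrow> nat set set \<Rightarrow> (nat \<Rightarrow> nat set) \<Rightarrow> nat set \<Rightarrow> nat set set" where
  "adh E N TE X e = {g \<in> E. \<exists>x y. g = {x, y} \<and> \<not> conn_avoid_edge TE e (node_of N X x) (node_of N X y)}"

text \<open>Torso at t: vertex Inl x for x in X t, vertex Inr s for the component Z_i of T - t
  containing the neighbour s of t. Multi-edges are kept; edges inside one Z_i disappear.\<close>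
definition tmap :: "nat set \<Rightarrow> nat set set \<Rightarrow> (nat \<Rightarrow> nat set) \<Rightarrow> nat \<Rightarrow> nat \<Rightarrow> nat + nat" where
  "tmap N TE X t x = (if node_of N X x = t then Inl x
     else Inr (THE s. {t, s} \<in> TE \<and> conn_avoid TE t s (node_of N X x)))"

definition torso_V :: "nat set set \<Rightarrow> (nat \<Rightarrow> nat set) \<Rightarrow> nat \<Rightarrow> (nat + nat) set" where
  "torso_V TE X t = Inl ` X t \<union> Inr ` {s. {t, s} \<in> TE}"

definition torso_E :: "nat set set \<Rightarrow> nat set \<Rightarrow> nat set set \<Rightarrow> (nat \<Rightarrow> nat set) \<Rightarrow> nat \<Rightarrow> (nat + nat) set multiset" where
  "torso_E E N TE X t = image_mset (\<lambda>e. tmap N TE X t ` e)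
      (filter_mset (\<lambda>e. card (tmap N TE X t ` e) = 2) (mset_set E))"

text \<open>Multigraphs: edges are sets of card 2 (ordinary) or card 1 (loops); loops count 2 in degree.\<close>
definition mdeg :: "'v set multiset \<Rightarrow> 'v \<Rightarrow> nat" where
  "mdeg M v = sum_mset (image_mset (\<lambda>e. if v \<in> e then (if card e = 1 then 2 else 1) else 0) M)"

definition suppress_step :: "'v set \<Rightarrow> ('v set \<times> 'v set multiset) \<Rightarrow> ('v set \<times> 'v set multiset) \<Rightarrow> bool" where
  "suppress_step P S S' \<longleftrightarrow> (\<exists>v \<in> fst S - P. mdeg (snd S) v \<le> 2
     \<and> fst S' = fst S - {v}
     \<and> snd S' = filter_mset (\<lambda>e. v \<notin> e) (snd S)
         + (if mdeg (snd S) v = 2 \<and> (\<forall>e\<in>#snd S. v \<in> e \<longrightarrow> card e = 2)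
            then {# \<Union>e\<in>set_mset (filter_mset (\<lambda>e. v \<in> e) (snd S)). e - {v} #} else {#}))"

definition center_size :: "'v set \<Rightarrow> ('v set \<times> 'v set multiset) \<Rightarrow> nat" where
  "center_size P S = Max {card (fst S') | S'. (S, S') \<in> {(a, b). suppress_step P a b}\<^sup>*
                                            \<and> \<not> (\<exists>S''. suppress_step P S' S'')}"

definition tcw_width :: "nat set set \<Rightarrow> nat set \<Rightarrow> nat set set \<Rightarrow> (nat \<Rightarrow> nat set) \<Rightarrow> nat" where
  "tcw_width E N TE X = max (Max (insert 0 ((\<lambda>e. card (adh E N TE X e)) ` TE)))
       (Max ((\<lambda>t. center_size (Inl ` X t) (torso_V TE X t, torso_E E N TE X t)) ` N))"

definition tcw :: "nat set \<Rightarrow> nat set set \<Rightarrow> nat" where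
  "tcw V E = Inf {w. \<exists>N TE X. tcd V E N TE X \<and> w = tcw_width E N TE X}"

end

(*
  The star decomposition of G^(alpha+1)_k with all of A in the centre bag has adhesions of size 2,
  and in the torso at the centre every other vertex subdivides an edge between two vertices of A
  and is suppressed; so the tree-cut width stays bounded.

  Conversely, in a decomposition of thickness at most alpha the alpha + 1 vertices of A cannot
  share a bag, say a and b lie in different bags. Take the last edge {p, y} of a shortest tree
  path from the bag of a to the bag y of b. Each of the k common neighbours of a and b in B lies in
  a bag that is p, y, or on one side of this edge, and then its edge to b crosses at p or its
  edge to a crosses at y. Hence k <= 2 * ecrw + 2 * alpha, unbounded in k.
*)

theory Submission
  imports Defs "HOL-Library.Nat_Bijection"
begin

lemma sym_tadj: "sym (tadj F)"
  by (auto simp: sym_def tadj_def insert_commute)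

lemma tadj_rtrancl_sym: "(x, y) \<in> (tadj F)\<^sup>* \<Longrightarrow> (y, x) \<in> (tadj F)\<^sup>*"
  using sym_rtrancl[OF sym_tadj] by (rule symD)

lemma conn_avoid_imp_conn_avoid_edge:
  assumes "t \<in> e" and "conn_avoid TE t a b"
  shows "(a, b) \<in> (tadj (TE - {e}))\<^sup>*"
proof -
  have "{(x, y). {x, y} \<in> TE \<and> x \<noteq> t \<and> y \<noteq> t} \<subseteq> tadj (TE - {e})"
    using assms(1) by (auto simp: tadj_def)
  then show ?thesis
    using assms(2) rtrancl_mono unfolding conn_avoid_def by blast
qed

lemma relpow_Least_step:
  assumes "(v, r) \<in> R ^^ n" and "v \<noteq> r"
  obtains u where "(v, u) \<in> R" and "(LEAST m. (u, r) \<in> R ^^ m) + 1 = (LEAST m. (v, r) \<in> R ^^ m)"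
proof -
  define d where "d x = (LEAST m. (x, r) \<in> R ^^ m)" for x
  have d_walk: "(v, r) \<in> R ^^ d v"
    unfolding d_def using assms(1) by (rule LeastI)
  then obtain m where m: "d v = Suc m"
    using assms(2) by (cases "d v") auto
  with d_walk obtain u where vu: "(v, u) \<in> R" and ur: "(u, r) \<in> R ^^ m"
    by (metis relpow_Suc_E2)
  have "d u \<le> m"
    unfolding d_def using ur by (rule Least_le)
  moreover have "(u, r) \<in> R ^^ d u"
    unfolding d_def using ur by (rule LeastI)
  with vu have "(v, r) \<in> R ^^ Suc (d u)"
    by (rule relpow_Suc_I2)
  then have "d v \<le> Suc (d u)"
    unfolding d_def by (rule Least_le)
  ultimately show thesis
    using that[OF vu] m unfolding d_def by simp
qed

text \<open>Sending each vertex to the edge towards a neighbour strictly closer to \<open>r\<close> is injective.\<close>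
lemma connected_card_le_card_edges_Suc:
  assumes "finite F" and "r \<in> N" and conn: "\<forall>v\<in>N. (v, r) \<in> (tadj F)\<^sup>*"
  shows "card N \<le> card F + 1"
proof -
  define d where "d x = (LEAST m. (x, r) \<in> tadj F ^^ m)" for x
  define parent where "parent v = (SOME u. (v, u) \<in> tadj F \<and> d u + 1 = d v)" for v
  have parent: "(v, parent v) \<in> tadj F \<and> d (parent v) + 1 = d v" if "v \<in> N - {r}" for v
  proof -
    have "(v, r) \<in> (tadj F)\<^sup>*"
      using conn that by simp
    then obtain n where "(v, r) \<in> tadj F ^^ n"
      unfolding rtrancl_power ..
    moreover have "v \<noteq> r"
      using that by simp
    ultimately obtain u where "(v, u) \<in> tadj F" and "d u + 1 = d v"
      unfolding d_def by (rule relpow_Least_step)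
    then have "(v, u) \<in> tadj F \<and> d u + 1 = d v" ..
    then show ?thesis
      unfolding parent_def by (rule someI)
  qed
  have "inj_on (\<lambda>v. {v, parent v}) (N - {r})"
  proof (rule inj_onI)
    fix v v' assume v: "v \<in> N - {r}" and v': "v' \<in> N - {r}" and eq: "{v, parent v} = {v', parent v'}"
    show "v = v'"
    proof (rule ccontr)
      assume "v \<noteq> v'"
      with eq have v_parent: "v = parent v'" and v'_parent: "parent v = v'"
        unfolding doubleton_eq_iff by blast+
      have "d v' + 1 = d v"
        using parent[OF v] unfolding v'_parent by simp
      moreover have "d v + 1 = d v'"
        using parent[OF v'] v_parent by simp
      ultimately show False by simp
    qed
  qed
  moreover have "(\<lambda>v. {v, parent v}) ` (N - {r}) \<subseteq> F"
    using parent by (auto simp: tadj_def)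
  ultimately have "card (N - {r}) \<le> card F"
    using \<open>finite F\<close> by (rule card_inj_on_le)
  then show ?thesis
    using \<open>r \<in> N\<close> by (simp add: card_Diff_singleton_if split: if_splits)
qed

lemma is_tree_finite_edges: "is_tree N TE \<Longrightarrow> finite TE"
proof -
  assume "is_tree N TE"
  then have "finite N" and "TE \<subseteq> Pow N"
    unfolding is_tree_def by auto
  then show ?thesis
    by (meson finite_Pow_iff finite_subset)
qed

lemma is_tree_remove_edge_disconnects:
  assumes T: "is_tree N TE" and e: "{u, v} \<in> TE"
  shows "(u, v) \<notin> (tadj (TE - {{u, v}}))\<^sup>*"
proof
  let ?R = "tadj (TE - {{u, v}})"
  assume uv: "(u, v) \<in> ?R\<^sup>*"
  have "tadj TE \<subseteq> ?R\<^sup>*"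
  proof
    fix p assume "p \<in> tadj TE"
    then obtain a b where p: "p = (a, b)" and ab: "{a, b} \<in> TE"
      by (auto simp: tadj_def)
    show "p \<in> ?R\<^sup>*"
    proof (cases "{a, b} = {u, v}")
      case True
      then show ?thesis
        using uv tadj_rtrancl_sym p by (auto simp: doubleton_eq_iff)
    next
      case False
      then show ?thesis
        using ab p by (auto simp: tadj_def)
    qed
  qed
  then have "(tadj TE)\<^sup>* \<subseteq> ?R\<^sup>*"
    by (metis rtrancl_subset_rtrancl)
  moreover have "u \<in> N"
    using T e unfolding is_tree_def by blast
  ultimately have "\<forall>w\<in>N. (w, u) \<in> ?R\<^sup>*"
    using T unfolding is_tree_def by blast
  then have "card N \<le> card (TE - {{u, v}}) + 1"
    using is_tree_finite_edges[OF T] \<open>u \<in> N\<close> by (intro connected_card_le_card_edges_Suc) auto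
  moreover have "card (TE - {{u, v}}) + 1 = card TE"
  proof -
    have "card TE > 0"
      using is_tree_finite_edges[OF T] e card_gt_0_iff by blast
    then show ?thesis
      using is_tree_finite_edges[OF T] e by (simp add: card_Diff_singleton)
  qed
  ultimately show False
    using T unfolding is_tree_def by simp
qed

lemma walk_avoids_edge_at_unreached:
  assumes "(x, z) \<in> tadj TE ^^ m" and "y \<in> e" and "\<forall>j\<le>m. (x, y) \<notin> tadj TE ^^ j"
  shows "(x, z) \<in> (tadj (TE - {e}))\<^sup>*"
  using assms(1,3)
proof (induction m arbitrary: z)
  case (Suc m)
  from Suc.prems(1) obtain z' where xz': "(x, z') \<in> tadj TE ^^ m" and z'z: "(z', z) \<in> tadj TE"
    by (rule relpow_Suc_E)
  have "{z', z} \<noteq> e"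
  proof
    assume "{z', z} = e"
    with \<open>y \<in> e\<close> have "z' = y \<or> z = y" by blast
    with xz' Suc.prems show False by fastforce
  qed
  with z'z have "(z', z) \<in> tadj (TE - {e})"
    by (simp add: tadj_def)
  moreover have "(x, z') \<in> (tadj (TE - {e}))\<^sup>*"
    using Suc.IH[OF xz'] Suc.prems(2) by simp
  ultimately show ?case by simp
qed simp

text \<open>The last edge of a shortest walk from \<open>x\<close> to \<open>y\<close>.\<close>
lemma separating_edge:
  assumes "(x, y) \<in> (tadj TE)\<^sup>*" and "x \<noteq> y"
  obtains p where "{p, y} \<in> TE" and "(x, p) \<in> (tadj (TE - {{p, y}}))\<^sup>*"
proof -
  define d where "d = (LEAST n. (x, y) \<in> tadj TE ^^ n)"
  have "(x, y) \<in> tadj TE ^^ d"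
    using assms(1) unfolding d_def rtrancl_power by (rule LeastI_ex)
  moreover have "d \<noteq> 0"
    using calculation assms(2) by (cases d) auto
  ultimately obtain m p where "d = Suc m" and xp: "(x, p) \<in> tadj TE ^^ m" and "(p, y) \<in> tadj TE"
    by (metis not0_implies_Suc relpow_Suc_E)
  then have edge: "{p, y} \<in> TE"
    by (simp add: tadj_def)
  have "\<forall>j\<le>m. (x, y) \<notin> tadj TE ^^ j"
  proof (intro allI impI)
    fix j assume "j \<le> m"
    then have "j < d"
      using \<open>d = Suc m\<close> by simp
    then show "(x, y) \<notin> tadj TE ^^ j"
      unfolding d_def by (rule not_less_Least)
  qed
  with xp have "(x, p) \<in> (tadj (TE - {{p, y}}))\<^sup>*"
    by (intro walk_avoids_edge_at_unreached) auto
  with edge show thesis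
    by (rule that)
qed

lemma node_of_eq:
  assumes "tcd V E N TE X" and "s \<in> N" and "v \<in> X s"
  shows "node_of N X v = s"
  unfolding node_of_def
proof (rule the_equality)
  show "s \<in> N \<and> v \<in> X s"
    using assms by simp
  show "s' = s" if "s' \<in> N \<and> v \<in> X s'" for s'
    using assms that unfolding tcd_def by blast
qed

lemma node_of_in:
  assumes "tcd V E N TE X" and "v \<in> V"
  shows "node_of N X v \<in> N" and "v \<in> X (node_of N X v)"
proof -
  obtain s where "s \<in> N" and "v \<in> X s"
    using assms unfolding tcd_def by blast
  then show "node_of N X v \<in> N" and "v \<in> X (node_of N X v)"
    using node_of_eq[OF assms(1)] by simp_all
qed

lemma cross_le_crossing_number:
  assumes "tcd V E N TE X" and "t \<in> N"
  shows "cross E N TE X t \<le> crossing_number E N TE X"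
  using assms unfolding crossing_number_def tcd_def is_tree_def by (intro Max_ge) auto

lemma card_bag_le_thickness:
  assumes "tcd V E N TE X" and "s \<in> N"
  shows "card (X s) \<le> thickness N X"
  using assms unfolding thickness_def tcd_def is_tree_def by (intro Max_ge) auto

lemma card_le_cross:
  assumes "finite E" and "inj_on g L"
    and "\<forall>l\<in>L. g l \<in> E \<and> (\<exists>u v. g l = {u, v} \<and> node_of N X u \<noteq> t \<and> node_of N X v \<noteq> t
           \<and> \<not> conn_avoid TE t (node_of N X u) (node_of N X v))"
  shows "card L \<le> cross E N TE X t"
proof -
  have "g ` L \<subseteq> {e \<in> E. \<exists>u v. e = {u, v} \<and> node_of N X u \<noteq> t \<and> node_of N X v \<noteq> t
           \<and> \<not> conn_avoid TE t (node_of N X u) (node_of N X v)}"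
    using assms(3) by blast
  then have "card (g ` L) \<le> cross E N TE X t"
    unfolding cross_def using assms(1) by (intro card_mono) auto
  then show ?thesis
    using card_image[OF assms(2)] by simp
qed

lemma card_in_bag_le:
  assumes "tcd V E N TE X" and "finite V" and "thickness N X \<le> \<alpha>" and "t \<in> N"
    and "inj_on w L" and "w ` L \<subseteq> V"
  shows "card {l \<in> L. node_of N X (w l) = t} \<le> \<alpha>"
proof -
  have "w ` {l \<in> L. node_of N X (w l) = t} \<subseteq> X t"
    using node_of_in(2)[OF assms(1)] assms(6) by auto
  moreover have "finite (X t)"
    using assms(1,2,4) unfolding tcd_def by (meson UN_upper finite_subset)
  moreover have "inj_on w {l \<in> L. node_of N X (w l) = t}"
    using assms(5) by (rule inj_on_subset) auto
  ultimately have "card {l \<in> L. node_of N X (w l) = t} \<le> card (X t)"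
    by (metis card_inj_on_le)
  also have "\<dots> \<le> \<alpha>"
    using card_bag_le_thickness[OF assms(1,4)] assms(3) by simp
  finally show ?thesis .
qed

lemma tree_edge_side:
  assumes "(p, z) \<in> (tadj TE)\<^sup>*" and "{p, q} \<in> TE"
  shows "(z, p) \<in> (tadj (TE - {{p, q}}))\<^sup>* \<or> (z, q) \<in> (tadj (TE - {{p, q}}))\<^sup>*"
  using assms(1)
proof (induction rule: rtrancl_induct)
  case (step y z)
  show ?case
  proof (cases "{y, z} = {p, q}")
    case True
    then show ?thesis
      by (auto simp: doubleton_eq_iff)
  next
    case False
    with step.hyps(2) have "(z, y) \<in> tadj (TE - {{p, q}})"
      by (auto simp: tadj_def insert_commute)
    with step.IH show ?thesis
      by (meson converse_rtrancl_into_rtrancl)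
  qed
qed simp

text \<open>A tree path avoiding \<open>p\<close> avoids the edge \<open>{p, q}\<close>, so it cannot join the two sides of it.\<close>
lemma card_le_cross_across_edge:
  assumes T: "is_tree N TE" and "finite E" and edge: "{p, q} \<in> TE"
    and c_side: "(node_of N X c, q) \<in> (tadj (TE - {{p, q}}))\<^sup>*" and "inj_on w L"
    and nbrs: "\<forall>l\<in>L. {c, w l} \<in> E \<and> w l \<noteq> c \<and> node_of N X (w l) \<noteq> p
      \<and> (node_of N X (w l), p) \<in> (tadj (TE - {{p, q}}))\<^sup>*"
  shows "card L \<le> cross E N TE X p"
proof (rule card_le_cross[OF \<open>finite E\<close>])
  let ?R = "(tadj (TE - {{p, q}}))\<^sup>*"
  have sides_disjoint: False if "(u, p) \<in> ?R" and "(u, q) \<in> ?R" for u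
  proof -
    have "(p, q) \<in> ?R"
      using tadj_rtrancl_sym[OF that(1)] that(2) by (rule rtrancl_trans)
    with is_tree_remove_edge_disconnects[OF T edge] show False by simp
  qed
  show "inj_on (\<lambda>l. {c, w l}) L"
    using \<open>inj_on w L\<close> nbrs unfolding inj_on_def doubleton_eq_iff by auto
  have separated: "\<not> conn_avoid TE p (node_of N X (w l)) (node_of N X c)" if "l \<in> L" for l
  proof
    assume "conn_avoid TE p (node_of N X (w l)) (node_of N X c)"
    then have "(node_of N X (w l), node_of N X c) \<in> ?R"
      by (intro conn_avoid_imp_conn_avoid_edge) simp_all
    then have "(node_of N X (w l), q) \<in> ?R"
      using c_side by (rule rtrancl_trans)
    with that nbrs sides_disjoint show False by blast
  qed
  have "node_of N X c \<noteq> p"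
    using c_side sides_disjoint by blast
  show "\<forall>l\<in>L. {c, w l} \<in> E \<and> (\<exists>u v. {c, w l} = {u, v} \<and> node_of N X u \<noteq> p
      \<and> node_of N X v \<noteq> p \<and> \<not> conn_avoid TE p (node_of N X u) (node_of N X v))"
  proof
    fix l assume "l \<in> L"
    moreover have "{c, w l} = {w l, c}"
      by (rule insert_commute)
    ultimately show "{c, w l} \<in> E \<and> (\<exists>u v. {c, w l} = {u, v} \<and> node_of N X u \<noteq> p
      \<and> node_of N X v \<noteq> p \<and> \<not> conn_avoid TE p (node_of N X u) (node_of N X v))"
      using nbrs separated \<open>node_of N X c \<noteq> p\<close> by blast
  qed
qed

text \<open>A common neighbour of \<open>a\<close> and \<open>b\<close> whose bag lies on the side of \<open>p\<close> has its edge to \<open>b\<close>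
  crossing at \<open>p\<close>; one whose bag lies on the side of \<open>y\<close> has its edge to \<open>a\<close> crossing at \<open>y\<close>.\<close>
lemma card_off_edge_le_cross:
  assumes T: "is_tree N TE" and "finite E" and edge: "{p, y} \<in> TE"
    and xp: "(node_of N X a, p) \<in> (tadj (TE - {{p, y}}))\<^sup>*" and y: "node_of N X b = y"
    and "finite L" and "inj_on w L"
    and nbrs: "\<forall>l\<in>L. {a, w l} \<in> E \<and> {w l, b} \<in> E \<and> w l \<noteq> a \<and> w l \<noteq> b \<and> node_of N X (w l) \<in> N"
  shows "card {l \<in> L. node_of N X (w l) \<notin> {p, y}} \<le> cross E N TE X p + cross E N TE X y"
proof -
  define s where "s l = node_of N X (w l)" for l
  let ?R = "(tadj (TE - {{p, y}}))\<^sup>*"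
  define Lp where "Lp = {l \<in> L. (s l, p) \<in> ?R \<and> s l \<noteq> p}"
  define Ly where "Ly = {l \<in> L. (s l, y) \<in> ?R \<and> s l \<noteq> y}"
  have Lp: "card Lp \<le> cross E N TE X p"
  proof (rule card_le_cross_across_edge[OF T \<open>finite E\<close> edge _ inj_on_subset[OF \<open>inj_on w L\<close>]])
    show "(node_of N X b, y) \<in> ?R"
      unfolding y by simp
    show "\<forall>l\<in>Lp. {b, w l} \<in> E \<and> w l \<noteq> b \<and> node_of N X (w l) \<noteq> p \<and> (node_of N X (w l), p) \<in> ?R"
      using nbrs unfolding Lp_def s_def by (simp add: insert_commute)
  qed (simp add: Lp_def)
  have Ly: "card Ly \<le> cross E N TE X y"
  proof (rule card_le_cross_across_edge[OF T \<open>finite E\<close> _ _ inj_on_subset[OF \<open>inj_on w L\<close>]])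
    show "{y, p} \<in> TE"
      using edge by (simp add: insert_commute)
    show "(node_of N X a, p) \<in> (tadj (TE - {{y, p}}))\<^sup>*"
      using xp by (simp add: insert_commute)
    show "\<forall>l\<in>Ly. {a, w l} \<in> E \<and> w l \<noteq> a \<and> node_of N X (w l) \<noteq> y
        \<and> (node_of N X (w l), y) \<in> (tadj (TE - {{y, p}}))\<^sup>*"
      using nbrs unfolding Ly_def s_def by (simp add: insert_commute)
  qed (simp add: Ly_def)
  have "{l \<in> L. s l \<notin> {p, y}} \<subseteq> Lp \<union> Ly"
  proof
    fix l assume l: "l \<in> {l \<in> L. s l \<notin> {p, y}}"
    have "p \<in> N"
      using T edge unfolding is_tree_def by blast
    with l nbrs have "(p, s l) \<in> (tadj TE)\<^sup>*"
      using T unfolding is_tree_def s_def by blast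
    from tree_edge_side[OF this edge] show "l \<in> Lp \<union> Ly"
      using l unfolding Lp_def Ly_def by blast
  qed
  then have "card {l \<in> L. s l \<notin> {p, y}} \<le> card (Lp \<union> Ly)"
    using \<open>finite L\<close> unfolding Lp_def Ly_def by (intro card_mono) simp_all
  also have "\<dots> \<le> card Lp + card Ly"
    by (rule card_Un_le)
  finally show ?thesis
    using Lp Ly unfolding s_def by linarith
qed

text \<open>The tree edge \<open>{p, y}\<close> separates the bags of \<open>a\<close> and \<open>b\<close>; the neighbours not covered by
  the previous lemma lie in the bags \<open>p\<close> and \<open>y\<close>, which hold at most \<open>\<alpha>\<close> vertices each.\<close>
lemma common_neighbours_le_crossing_number:
  assumes D: "tcd V E N TE X" and "finite V" and "finite E" and "thickness N X \<le> \<alpha>"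
    and "a \<in> V" and "b \<in> V" and ab: "node_of N X a \<noteq> node_of N X b"
    and "finite L" and "inj_on w L"
    and nbrs: "\<forall>l\<in>L. w l \<in> V \<and> {a, w l} \<in> E \<and> {w l, b} \<in> E \<and> w l \<noteq> a \<and> w l \<noteq> b"
  shows "card L \<le> 2 * crossing_number E N TE X + 2 * \<alpha>"
proof -
  define y where "y = node_of N X b"
  define s where "s l = node_of N X (w l)" for l
  have T: "is_tree N TE"
    using D unfolding tcd_def by simp
  have "node_of N X a \<in> N" and "y \<in> N"
    unfolding y_def using node_of_in(1)[OF D] assms(5,6) by auto
  then have "(node_of N X a, y) \<in> (tadj TE)\<^sup>*"
    using T unfolding is_tree_def by blast
  then obtain p where edge: "{p, y} \<in> TE" and xp: "(node_of N X a, p) \<in> (tadj (TE - {{p, y}}))\<^sup>*"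
    using ab unfolding y_def by (blast elim: separating_edge)
  then have "p \<in> N"
    using T unfolding is_tree_def by blast
  have "card {l \<in> L. s l \<notin> {p, y}} \<le> cross E N TE X p + cross E N TE X y"
    unfolding s_def
    using T \<open>finite E\<close> edge xp y_def[symmetric] \<open>finite L\<close> \<open>inj_on w L\<close>
  proof (rule card_off_edge_le_cross)
    show "\<forall>l\<in>L. {a, w l} \<in> E \<and> {w l, b} \<in> E \<and> w l \<noteq> a \<and> w l \<noteq> b \<and> node_of N X (w l) \<in> N"
      using nbrs node_of_in(1)[OF D] by blast
  qed
  moreover have in_bag: "card {l \<in> L. s l = t} \<le> \<alpha>" if "t \<in> N" for t
    unfolding s_def using card_in_bag_le[OF D \<open>finite V\<close> \<open>thickness N X \<le> \<alpha>\<close> that \<open>inj_on w L\<close>] nbrs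
    by blast
  moreover have "card L \<le> card {l \<in> L. s l \<notin> {p, y}} + card {l \<in> L. s l = p} + card {l \<in> L. s l = y}"
  proof -
    have "L = {l \<in> L. s l \<notin> {p, y}} \<union> {l \<in> L. s l = p} \<union> {l \<in> L. s l = y}"
      by blast
    then have "card L = card ({l \<in> L. s l \<notin> {p, y}} \<union> {l \<in> L. s l = p} \<union> {l \<in> L. s l = y})"
      by (rule arg_cong)
    also have "\<dots> \<le> card ({l \<in> L. s l \<notin> {p, y}} \<union> {l \<in> L. s l = p}) + card {l \<in> L. s l = y}"
      by (rule card_Un_le)
    also have "\<dots> \<le> card {l \<in> L. s l \<notin> {p, y}} + card {l \<in> L. s l = p} + card {l \<in> L. s l = y}"
      using card_Un_le by (intro add_right_mono)
    finally show ?thesis .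
  qed
  ultimately show ?thesis
    using cross_le_crossing_number[OF D \<open>p \<in> N\<close>] cross_le_crossing_number[OF D \<open>y \<in> N\<close>]
      in_bag[OF \<open>p \<in> N\<close>] in_bag[OF \<open>y \<in> N\<close>] by linarith
qed

definition star_N :: "nat set \<Rightarrow> nat set" where
  "star_N L = insert 0 (Suc ` L)"

definition star_TE :: "nat set \<Rightarrow> nat set set" where
  "star_TE L = (\<lambda>v. {0, Suc v}) ` L"

definition star_X :: "nat set \<Rightarrow> nat set \<Rightarrow> nat \<Rightarrow> nat set" where
  "star_X C L s = (if s = 0 then C else if s - 1 \<in> L then {s - 1} else {})"

lemma is_tree_star:
  assumes "finite L"
  shows "is_tree (star_N L) (star_TE L)"
proof -
  have to_root: "(u, 0) \<in> (tadj (star_TE L))\<^sup>*" if "u \<in> star_N L" for u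
  proof (cases "u = 0")
    case False
    with that obtain v where "v \<in> L" and "u = Suc v"
      unfolding star_N_def by auto
    then have "(u, 0) \<in> tadj (star_TE L)"
      unfolding tadj_def star_TE_def by (auto simp: insert_commute)
    then show ?thesis by blast
  qed simp
  have "(u, u') \<in> (tadj (star_TE L))\<^sup>*" if "u \<in> star_N L" and "u' \<in> star_N L" for u u'
    using to_root[OF that(1)] tadj_rtrancl_sym[OF to_root[OF that(2)]] by simp
  moreover have "card (star_TE L) = card L"
    unfolding star_TE_def by (rule card_image) (auto simp: inj_on_def doubleton_eq_iff)
  moreover have "card (star_N L) = card L + 1"
    unfolding star_N_def using assms by (simp add: card_image)
  ultimately show ?thesis
    unfolding is_tree_def using assms by (auto simp: star_N_def star_TE_def)
qed

lemma tcd_star: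
  assumes "finite L" and "C \<inter> L = {}"
  shows "tcd (C \<union> L) E (star_N L) (star_TE L) (star_X C L)"
  unfolding tcd_def
proof (intro conjI ballI impI)
  show "is_tree (star_N L) (star_TE L)"
    using assms(1) by (rule is_tree_star)
  show "star_X C L s \<inter> star_X C L s' = {}" if "s \<in> star_N L" "s' \<in> star_N L" "s \<noteq> s'" for s s'
    using that assms(2) unfolding star_N_def star_X_def by auto
  have "v \<in> (\<Union>s\<in>star_N L. star_X C L s)" if "v \<in> L" for v
    using that unfolding star_N_def star_X_def by (intro UN_I[of "Suc v"]) auto
  then show "(\<Union>s\<in>star_N L. star_X C L s) = C \<union> L"
    unfolding star_N_def star_X_def by (auto split: if_splits)
qed

lemma node_of_star_centre:
  assumes "finite L" and "C \<inter> L = {}" and "c \<in> C"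
  shows "node_of (star_N L) (star_X C L) c = 0"
  by (rule node_of_eq[OF tcd_star[OF assms(1,2)]]) (use assms in \<open>auto simp: star_N_def star_X_def\<close>)

lemma node_of_star_leaf:
  assumes "finite L" and "C \<inter> L = {}" and "v \<in> L"
  shows "node_of (star_N L) (star_X C L) v = Suc v"
  by (rule node_of_eq[OF tcd_star[OF assms(1,2)]]) (use assms in \<open>auto simp: star_N_def star_X_def\<close>)

lemma conn_avoid_star_centre: "conn_avoid (star_TE L) 0 a b \<longleftrightarrow> a = b"
proof -
  have "{(x, y). {x, y} \<in> star_TE L \<and> x \<noteq> 0 \<and> y \<noteq> 0} = {}"
    unfolding star_TE_def by (auto simp: doubleton_eq_iff)
  then show ?thesis
    unfolding conn_avoid_def by (simp only:) simp
qed

lemma ecrw_attained: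
  assumes "finite V" and "\<alpha> > 0"
  obtains N TE X where "tcd V E N TE X" and "thickness N X \<le> \<alpha>"
    and "ecrw \<alpha> V E = crossing_number E N TE X"
proof -
  let ?S = "{c. \<exists>N TE X. tcd V E N TE X \<and> thickness N X \<le> \<alpha> \<and> c = crossing_number E N TE X}"
  have "tcd V E (star_N V) (star_TE V) (star_X {} V)"
    using tcd_star[OF assms(1), of "{}"] by simp
  moreover have "thickness (star_N V) (star_X {} V) \<le> \<alpha>"
  proof -
    have "card (star_X {} V s) \<le> 1" for s
      unfolding star_X_def by simp
    moreover have "finite (star_N V)"
      unfolding star_N_def using assms(1) by simp
    ultimately have "thickness (star_N V) (star_X {} V) \<le> 1"
      unfolding thickness_def by (simp add: star_N_def)
    with assms(2) show ?thesis by simp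
  qed
  ultimately have "?S \<noteq> {}" by blast
  then have "ecrw \<alpha> V E \<in> ?S"
    unfolding ecrw_def by (rule Inf_nat_def1)
  with that show thesis by blast
qed

lemma tcw_le_tcw_width: "tcd V E N TE X \<Longrightarrow> tcw V E \<le> tcw_width E N TE X"
  unfolding tcw_def by (rule cInf_lower) auto

abbreviation suppress_rel :: "'v set \<Rightarrow> (('v set \<times> 'v set multiset) \<times> ('v set \<times> 'v set multiset)) set" where
  "suppress_rel P \<equiv> {(S, S'). suppress_step P S S'}"

lemma suppress_step_removes_vertex: "suppress_step P S S' \<Longrightarrow> \<exists>v\<in>fst S. fst S' = fst S - {v}"
  unfolding suppress_step_def by blast

lemma suppress_rtrancl_vertices_subset: "(S, S') \<in> (suppress_rel P)\<^sup>* \<Longrightarrow> fst S' \<subseteq> fst S"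
proof (induction rule: rtrancl_induct)
  case (step S' S'')
  then show ?case
    using suppress_step_removes_vertex[of P S' S''] by auto
qed simp

lemma suppress_terminates:
  "finite (fst S) \<Longrightarrow> \<exists>S'. (S, S') \<in> (suppress_rel P)\<^sup>* \<and> \<not> (\<exists>S''. suppress_step P S' S'')"
proof (induction "card (fst S)" arbitrary: S rule: less_induct)
  case less
  show ?case
  proof (cases "\<exists>S1. suppress_step P S S1")
    case True
    then obtain S1 v where step: "suppress_step P S S1" and "v \<in> fst S" and "fst S1 = fst S - {v}"
      using suppress_step_removes_vertex by blast
    with less.prems have "card (fst S1) < card (fst S)" and "finite (fst S1)"
      by (metis card_Diff1_less, simp)
    with less.hyps obtain S' where "(S1, S') \<in> (suppress_rel P)\<^sup>*" and "\<not> (\<exists>S''. suppress_step P S' S'')"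
      by blast
    with step show ?thesis
      by (meson case_prodI converse_rtrancl_into_rtrancl mem_Collect_eq)
  qed blast
qed

lemma center_size_le:
  assumes "finite (fst S)"
    and "\<And>S'. (S, S') \<in> (suppress_rel P)\<^sup>* \<Longrightarrow> \<not> (\<exists>S''. suppress_step P S' S'') \<Longrightarrow> card (fst S') \<le> c"
  shows "center_size P S \<le> c"
proof -
  let ?A = "{card (fst S') | S'. (S, S') \<in> (suppress_rel P)\<^sup>* \<and> \<not> (\<exists>S''. suppress_step P S' S'')}"
  have "?A \<subseteq> {..c}"
    using assms(2) by auto
  moreover have "?A \<noteq> {}"
    using suppress_terminates[OF assms(1)] by blast
  ultimately show ?thesis
    unfolding center_size_def by (meson Max_le_iff atMost_iff finite_atMost finite_subset subsetD)
qed

lemma center_size_le_card: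
  assumes "finite (fst S)"
  shows "center_size P S \<le> card (fst S)"
  by (rule center_size_le[OF assms]) (use suppress_rtrancl_vertices_subset assms in \<open>meson card_mono\<close>)

text \<open>In the torso at the centre of the star decomposition every vertex \<open>Inr r\<close> subdivides an edge
  between two vertices of the centre bag; suppressing such vertices preserves this shape.\<close>
definition inr_subdividing :: "'a set \<Rightarrow> (('a + 'b) set \<times> ('a + 'b) set multiset) \<Rightarrow> bool" where
  "inr_subdividing A S \<longleftrightarrow> fst S \<subseteq> Inl ` A \<union> range Inr \<and>
     (\<forall>r. Inr r \<in> fst S \<longrightarrow>
        (\<exists>a1 a2. filter_mset (\<lambda>e. Inr r \<in> e) (snd S) = {#{Inl a1, Inr r}, {Inl a2, Inr r}#}))"

lemma mdeg_filter_incident: "mdeg M v = mdeg (filter_mset (\<lambda>e. v \<in> e) M) v"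
proof -
  have "mdeg M v = mdeg (filter_mset (\<lambda>e. v \<in> e) M + filter_mset (\<lambda>e. v \<notin> e) M) v"
    by (simp flip: multiset_partition)
  also have "\<dots> = mdeg (filter_mset (\<lambda>e. v \<in> e) M) v + mdeg (filter_mset (\<lambda>e. v \<notin> e) M) v"
    unfolding mdeg_def by (simp only: image_mset_union sum_mset.union)
  also have "mdeg (filter_mset (\<lambda>e. v \<notin> e) M) v = 0"
    unfolding mdeg_def by (induction M) auto
  finally show ?thesis by simp
qed

lemma mdeg_inr_subdividing:
  assumes "filter_mset (\<lambda>e. Inr r \<in> e) M = {#{Inl a1, Inr r}, {Inl a2, Inr r}#}"
  shows "mdeg M (Inr r) = 2"
  using mdeg_filter_incident[of M "Inr r"] assms by (simp add: mdeg_def)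

lemma inr_subdividing_suppress_step:
  assumes inv: "inr_subdividing A S" and step: "suppress_step (Inl ` A) S S'"
  shows "inr_subdividing A S'"
proof -
  obtain v where v: "v \<in> fst S - Inl ` A" and vertices: "fst S' = fst S - {v}"
    and edges: "snd S' = filter_mset (\<lambda>e. v \<notin> e) (snd S)
         + (if mdeg (snd S) v = 2 \<and> (\<forall>e\<in>#snd S. v \<in> e \<longrightarrow> card e = 2)
            then {# \<Union>e\<in>set_mset (filter_mset (\<lambda>e. v \<in> e) (snd S)). e - {v} #} else {#})"
    using step unfolding suppress_step_def by blast
  obtain r where vr: "v = Inr r"
    using v inv unfolding inr_subdividing_def by auto
  obtain a1 a2 where "filter_mset (\<lambda>e. Inr r \<in> e) (snd S) = {#{Inl a1, Inr r}, {Inl a2, Inr r}#}"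
    using inv v vr unfolding inr_subdividing_def by auto
  then have new_edge: "(\<Union>e\<in>set_mset (filter_mset (\<lambda>e. v \<in> e) (snd S)). e - {v}) = {Inl a1, Inl a2}"
    unfolding vr by auto
  show ?thesis
    unfolding inr_subdividing_def
  proof (intro conjI allI impI)
    show "fst S' \<subseteq> Inl ` A \<union> range Inr"
      using inv vertices unfolding inr_subdividing_def by auto
    fix r' assume r': "Inr r' \<in> fst S'"
    then have "r' \<noteq> r" and "Inr r' \<in> fst S"
      using vertices vr by auto
    then obtain b1 b2 where
      "filter_mset (\<lambda>e. Inr r' \<in> e) (snd S) = {#{Inl b1, Inr r'}, {Inl b2, Inr r'}#}"
      using inv unfolding inr_subdividing_def by auto
    moreover have "filter_mset (\<lambda>e. Inr r' \<in> e) (filter_mset (\<lambda>e. v \<notin> e) (snd S))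
        = filter_mset (\<lambda>e. v \<notin> e) (filter_mset (\<lambda>e. Inr r' \<in> e) (snd S))"
      by (simp add: filter_filter_mset conj_commute)
    ultimately have "filter_mset (\<lambda>e. Inr r' \<in> e) (filter_mset (\<lambda>e. v \<notin> e) (snd S))
        = {#{Inl b1, Inr r'}, {Inl b2, Inr r'}#}"
      using \<open>r' \<noteq> r\<close> vr by simp
    then show "\<exists>a1 a2. filter_mset (\<lambda>e. Inr r' \<in> e) (snd S') = {#{Inl a1, Inr r'}, {Inl a2, Inr r'}#}"
      using edges new_edge by auto
  qed
qed

lemma inr_subdividing_suppress_rtrancl:
  "(S, S') \<in> (suppress_rel (Inl ` A))\<^sup>* \<Longrightarrow> inr_subdividing A S \<Longrightarrow> inr_subdividing A S'"
  by (induction rule: rtrancl_induct) (auto intro: inr_subdividing_suppress_step)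

lemma inr_subdividing_terminal:
  assumes inv: "inr_subdividing A S" and terminal: "\<not> (\<exists>S'. suppress_step (Inl ` A) S S')"
  shows "fst S \<subseteq> Inl ` A"
proof
  fix v assume v: "v \<in> fst S"
  show "v \<in> Inl ` A"
  proof (rule ccontr)
    assume "v \<notin> Inl ` A"
    with inv v obtain r a1 a2 where vr: "v = Inr r"
      and incident: "filter_mset (\<lambda>e. Inr r \<in> e) (snd S) = {#{Inl a1, Inr r}, {Inl a2, Inr r}#}"
      unfolding inr_subdividing_def by blast
    have "mdeg (snd S) v = 2"
      unfolding vr using incident by (rule mdeg_inr_subdividing)
    with v \<open>v \<notin> Inl ` A\<close> have "suppress_step (Inl ` A) S (fst S - {v}, filter_mset (\<lambda>e. v \<notin> e) (snd S)
         + (if mdeg (snd S) v = 2 \<and> (\<forall>e\<in>#snd S. v \<in> e \<longrightarrow> card e = 2)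
            then {# \<Union>e\<in>set_mset (filter_mset (\<lambda>e. v \<in> e) (snd S)). e - {v} #} else {#}))"
      unfolding suppress_step_def by auto
    with terminal show False by blast
  qed
qed

lemma center_size_inr_subdividing:
  assumes "finite (fst S)" and "inr_subdividing A S" and "finite A"
  shows "center_size (Inl ` A) S \<le> card A"
proof (rule center_size_le[OF assms(1)])
  fix S' assume "(S, S') \<in> (suppress_rel (Inl ` A))\<^sup>*" and "\<not> (\<exists>S''. suppress_step (Inl ` A) S' S'')"
  then have "fst S' \<subseteq> Inl ` A"
    using inr_subdividing_terminal inr_subdividing_suppress_rtrancl assms(2) by blast
  then have "card (fst S') \<le> card (Inl ` A :: ('a + 'b) set)"
    using assms(3) by (intro card_mono) auto
  also have "\<dots> = card A"
    by (simp add: card_image)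
  finally show "card (fst S') \<le> card A" .
qed

text \<open>The graph \<open>G\<^sup>\<alpha>\<^sup>+\<^sup>1\<^sub>k\<close>: the vertex \<open>a\<^sub>i\<close> (\<open>i \<le> \<alpha>\<close>) is encoded as \<open>2 * i\<close> and \<open>({a\<^sub>i, a\<^sub>j}, l)\<close>
  (\<open>i < j\<close>, \<open>l < k\<close>) as the odd number \<open>pair_code i j l\<close>.\<close>
definition pair_code :: "nat \<Rightarrow> nat \<Rightarrow> nat \<Rightarrow> nat" where
  "pair_code i j l = 2 * prod_encode (prod_encode (i, j), l) + 1"

definition G_A :: "nat \<Rightarrow> nat set" where
  "G_A \<alpha> = (\<lambda>i. 2 * i) ` {..\<alpha>}"

definition G_B :: "nat \<Rightarrow> nat \<Rightarrow> nat set" where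
  "G_B \<alpha> k = {pair_code i j l | i j l. i < j \<and> j \<le> \<alpha> \<and> l < k}"

definition G_E :: "nat \<Rightarrow> nat \<Rightarrow> nat set set" where
  "G_E \<alpha> k = {{2 * m, pair_code i j l} | m i j l. i < j \<and> j \<le> \<alpha> \<and> l < k \<and> (m = i \<or> m = j)}"

lemma pair_code_eq_iff [simp]: "pair_code i j l = pair_code i' j' l' \<longleftrightarrow> i = i' \<and> j = j' \<and> l = l'"
  unfolding pair_code_def by (auto simp: prod_encode_eq)

lemma pair_code_neq_even [simp]: "pair_code i j l \<noteq> 2 * m" "2 * m \<noteq> pair_code i j l"
  unfolding pair_code_def by presburger+

lemma pair_code_in_G_B: "i < j \<Longrightarrow> j \<le> \<alpha> \<Longrightarrow> l < k \<Longrightarrow> pair_code i j l \<in> G_B \<alpha> k"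
  unfolding G_B_def by blast

lemma even_in_G_A: "m \<le> \<alpha> \<Longrightarrow> 2 * m \<in> G_A \<alpha>"
  unfolding G_A_def by blast

lemma G_E_memE:
  assumes "g \<in> G_E \<alpha> k"
  obtains m i j l where "g = {2 * m, pair_code i j l}" "i < j" "j \<le> \<alpha>" "l < k" "m = i \<or> m = j"
  using assms unfolding G_E_def by blast

lemma finite_G_A: "finite (G_A \<alpha>)"
  unfolding G_A_def by simp

lemma card_G_A: "card (G_A \<alpha>) = \<alpha> + 1"
  unfolding G_A_def by (subst card_image) (auto simp: inj_on_def)

lemma finite_G_B: "finite (G_B \<alpha> k)"
proof (rule finite_subset)
  show "G_B \<alpha> k \<subseteq> (\<lambda>(i, j, l). pair_code i j l) ` ({..\<alpha>} \<times> {..\<alpha>} \<times> {..<k})"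
  proof
    fix x assume "x \<in> G_B \<alpha> k"
    then obtain i j l where "x = pair_code i j l" "i < j" "j \<le> \<alpha>" "l < k"
      unfolding G_B_def by blast
    then show "x \<in> (\<lambda>(i, j, l). pair_code i j l) ` ({..\<alpha>} \<times> {..\<alpha>} \<times> {..<k})"
      by (intro image_eqI[where x="(i, j, l)"]) simp_all
  qed
qed simp

lemma finite_G_E: "finite (G_E \<alpha> k)"
proof (rule finite_subset)
  show "G_E \<alpha> k \<subseteq> (\<lambda>(m, i, j, l). {2 * m, pair_code i j l}) ` ({..\<alpha>} \<times> {..\<alpha>} \<times> {..\<alpha>} \<times> {..<k})"
  proof
    fix x assume "x \<in> G_E \<alpha> k"
    then obtain m i j l where "x = {2 * m, pair_code i j l}" "i < j" "j \<le> \<alpha>" "l < k" "m = i \<or> m = j"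
      by (rule G_E_memE)
    then show "x \<in> (\<lambda>(m, i, j, l). {2 * m, pair_code i j l}) ` ({..\<alpha>} \<times> {..\<alpha>} \<times> {..\<alpha>} \<times> {..<k})"
      by (intro image_eqI[where x="(m, i, j, l)"]) auto
  qed
qed simp

lemma G_A_G_B_disjoint: "G_A \<alpha> \<inter> G_B \<alpha> k = {}"
  unfolding G_A_def G_B_def by auto

lemma graph_G: "graph (G_A \<alpha> \<union> G_B \<alpha> k) (G_E \<alpha> k)"
  unfolding graph_def
proof (intro conjI ballI)
  show "finite (G_A \<alpha> \<union> G_B \<alpha> k)"
    using finite_G_A finite_G_B by simp
  fix e assume "e \<in> G_E \<alpha> k"
  then obtain m i j l where "e = {2 * m, pair_code i j l}" "i < j" "j \<le> \<alpha>" "l < k" "m = i \<or> m = j"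
    by (rule G_E_memE)
  then show "e \<subseteq> G_A \<alpha> \<union> G_B \<alpha> k" and "card e = 2"
    using even_in_G_A pair_code_in_G_B by auto
qed

lemma G_E_incident:
  assumes "i < j" and "j \<le> \<alpha>" and "l < k"
  shows "{g \<in> G_E \<alpha> k. pair_code i j l \<in> g} = {{2 * i, pair_code i j l}, {2 * j, pair_code i j l}}"
  using assms by (auto simp: G_E_def)

context
  fixes \<alpha> k :: nat
begin

abbreviation "SN \<equiv> star_N (G_B \<alpha> k)"
abbreviation "STE \<equiv> star_TE (G_B \<alpha> k)"
abbreviation "SX \<equiv> star_X (G_A \<alpha>) (G_B \<alpha> k)"

lemma tcd_G_star: "tcd (G_A \<alpha> \<union> G_B \<alpha> k) (G_E \<alpha> k) SN STE SX"
  using finite_G_B G_A_G_B_disjoint by (rule tcd_star)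

lemma node_of_G_A: "v \<in> G_A \<alpha> \<Longrightarrow> node_of SN SX v = 0"
  using finite_G_B G_A_G_B_disjoint by (rule node_of_star_centre)

lemma node_of_G_B: "v \<in> G_B \<alpha> k \<Longrightarrow> node_of SN SX v = Suc v"
  using finite_G_B G_A_G_B_disjoint by (rule node_of_star_leaf)

text \<open>An edge not at the leaf's vertex joins the centre to another leaf, so it does not cross \<open>e\<close>.\<close>
lemma card_adh_G_star_le:
  assumes "e \<in> STE"
  shows "card (adh (G_E \<alpha> k) SN STE SX e) \<le> 2"
proof -
  obtain v where "v \<in> G_B \<alpha> k" and ev: "e = {0, Suc v}"
    using assms unfolding star_TE_def by blast
  then obtain i j l where v: "v = pair_code i j l" "i < j" "j \<le> \<alpha>" "l < k"
    unfolding G_B_def by blast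
  have "adh (G_E \<alpha> k) SN STE SX e \<subseteq> {g \<in> G_E \<alpha> k. v \<in> g}"
  proof
    fix g assume g: "g \<in> adh (G_E \<alpha> k) SN STE SX e"
    then have "g \<in> G_E \<alpha> k"
      unfolding adh_def by blast
    then obtain m i' j' l' where g_eq: "g = {2 * m, pair_code i' j' l'}"
      and "i' < j'" "j' \<le> \<alpha>" "l' < k" "m = i' \<or> m = j'"
      by (rule G_E_memE)
    then have u: "pair_code i' j' l' \<in> G_B \<alpha> k" and "2 * m \<in> G_A \<alpha>"
      using pair_code_in_G_B even_in_G_A by auto
    show "g \<in> {g \<in> G_E \<alpha> k. v \<in> g}"
    proof (rule ccontr)
      assume "g \<notin> {g \<in> G_E \<alpha> k. v \<in> g}"
      with \<open>g \<in> G_E \<alpha> k\<close> g_eq have "pair_code i' j' l' \<noteq> v"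
        by auto
      with u ev have "{0, Suc (pair_code i' j' l')} \<in> STE - {e}"
        unfolding star_TE_def by auto
      then have "(p, q) \<in> (tadj (STE - {e}))\<^sup>*"
        if "p \<in> {0, Suc (pair_code i' j' l')}" and "q \<in> {0, Suc (pair_code i' j' l')}" for p q
        using that by (auto simp: tadj_def insert_commute intro: r_into_rtrancl)
      moreover have "node_of SN SX x \<in> {0, Suc (pair_code i' j' l')}" if "x \<in> g" for x
        using that g_eq node_of_G_A[OF \<open>2 * m \<in> G_A \<alpha>\<close>] node_of_G_B[OF u] by auto
      ultimately show False
        using g unfolding adh_def conn_avoid_edge_def by auto
    qed
  qed
  then have "card (adh (G_E \<alpha> k) SN STE SX e) \<le> card {g \<in> G_E \<alpha> k. v \<in> g}"
    using finite_G_E by (intro card_mono) auto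
  also have "\<dots> \<le> 2"
    unfolding v(1) G_E_incident[OF v(2-4)] by (rule card_insert_le_m1) auto
  finally show ?thesis .
qed

lemma tmap_G_A: "x \<in> G_A \<alpha> \<Longrightarrow> tmap SN STE SX 0 x = Inl x"
  unfolding tmap_def using node_of_G_A by simp

lemma tmap_G_B:
  assumes "x \<in> G_B \<alpha> k"
  shows "tmap SN STE SX 0 x = Inr (Suc x)"
proof -
  have "(THE s. {0, s} \<in> STE \<and> conn_avoid STE 0 s (Suc x)) = Suc x"
    unfolding conn_avoid_star_centre using assms by (intro the_equality) (auto simp: star_TE_def)
  then show ?thesis
    unfolding tmap_def using node_of_G_B[OF assms] by simp
qed

lemma tmap_G_edge:
  assumes "i < j" and "j \<le> \<alpha>" and "l < k" and "m = i \<or> m = j"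
  shows "tmap SN STE SX 0 ` {2 * m, pair_code i j l} = {Inl (2 * m), Inr (Suc (pair_code i j l))}"
  using tmap_G_A[OF even_in_G_A] tmap_G_B[OF pair_code_in_G_B] assms by auto

lemma torso_edges_at_G_B:
  assumes "w = pair_code i j l" and "i < j" and "j \<le> \<alpha>" and "l < k"
  shows "{e \<in> G_E \<alpha> k. card (tmap SN STE SX 0 ` e) = 2 \<and> Inr (Suc w) \<in> tmap SN STE SX 0 ` e}
       = {{2 * i, w}, {2 * j, w}}"
proof -
  have "card (tmap SN STE SX 0 ` e) = 2 \<and> (Inr (Suc w) \<in> tmap SN STE SX 0 ` e \<longleftrightarrow> w \<in> e)"
    if "e \<in> G_E \<alpha> k" for e
  proof -
    obtain m i' j' l' where e: "e = {2 * m, pair_code i' j' l'}" "i' < j'" "j' \<le> \<alpha>" "l' < k" "m = i' \<or> m = j'"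
      using \<open>e \<in> G_E \<alpha> k\<close> by (rule G_E_memE)
    show ?thesis
      unfolding e(1) tmap_G_edge[OF e(2-5)] using assms(1) by auto
  qed
  then show ?thesis
    using G_E_incident[OF assms(2-4)] assms(1) by blast
qed

lemma inr_subdividing_torso_centre:
  "inr_subdividing (G_A \<alpha>) (torso_V STE SX 0, torso_E (G_E \<alpha> k) SN STE SX 0)"
  unfolding inr_subdividing_def
proof (intro conjI allI impI)
  show "fst (torso_V STE SX 0, torso_E (G_E \<alpha> k) SN STE SX 0) \<subseteq> Inl ` G_A \<alpha> \<union> range Inr"
    unfolding torso_V_def star_X_def by auto
  fix r assume "Inr r \<in> fst (torso_V STE SX 0, torso_E (G_E \<alpha> k) SN STE SX 0)"
  then obtain w where "w \<in> G_B \<alpha> k" and rw: "r = Suc w"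
    unfolding torso_V_def star_TE_def by (auto simp: doubleton_eq_iff)
  then obtain i j l where w: "w = pair_code i j l" "i < j" "j \<le> \<alpha>" "l < k"
    unfolding G_B_def by blast
  let ?tm = "tmap SN STE SX 0"
  have "filter_mset (\<lambda>e. Inr r \<in> e) (torso_E (G_E \<alpha> k) SN STE SX 0)
      = image_mset ((`) ?tm) (mset_set {e \<in> G_E \<alpha> k. card (?tm ` e) = 2 \<and> Inr r \<in> ?tm ` e})"
    unfolding torso_E_def filter_mset_image_mset filter_filter_mset
    by (simp add: filter_mset_mset_set finite_G_E)
  also have "\<dots> = image_mset ((`) ?tm) (mset_set {{2 * i, w}, {2 * j, w}})"
    using torso_edges_at_G_B[OF w] rw by simp
  also have "\<dots> = {#{Inl (2 * i), Inr r}, {Inl (2 * j), Inr r}#}"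
    using w rw tmap_G_edge[of i j l i] tmap_G_edge[of i j l j] by (auto simp: doubleton_eq_iff)
  finally show "\<exists>a1 a2. filter_mset (\<lambda>e. Inr r \<in> e)
      (snd (torso_V STE SX 0, torso_E (G_E \<alpha> k) SN STE SX 0)) = {#{Inl a1, Inr r}, {Inl a2, Inr r}#}"
    by auto
qed

lemma center_size_G_star_le:
  assumes "0 < \<alpha>" and "t \<in> SN"
  shows "center_size (Inl ` SX t) (torso_V STE SX t, torso_E (G_E \<alpha> k) SN STE SX t) \<le> \<alpha> + 1"
proof (cases "t = 0")
  case True
  have "{s. {0, s} \<in> STE} \<subseteq> Suc ` G_B \<alpha> k"
    unfolding star_TE_def by (auto simp: doubleton_eq_iff)
  then have "finite {s. {0, s} \<in> STE}"
    using finite_G_B by (rule finite_subset[OF _ finite_imageI])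
  then have "finite (torso_V STE SX 0)"
    unfolding torso_V_def star_X_def using finite_G_A by simp
  then show ?thesis
    using center_size_inr_subdividing[OF _ inr_subdividing_torso_centre finite_G_A] True card_G_A
    by (simp add: star_X_def)
next
  case False
  with assms obtain v where "v \<in> G_B \<alpha> k" and "t = Suc v"
    unfolding star_N_def by auto
  then have "torso_V STE SX t \<subseteq> {Inl v, Inr 0}"
    unfolding torso_V_def star_X_def star_TE_def by (auto simp: doubleton_eq_iff)
  then have "finite (torso_V STE SX t)" and "card (torso_V STE SX t) \<le> 2"
    by (auto intro: finite_subset dest: card_mono[rotated])
  with center_size_le_card[of "(torso_V STE SX t, torso_E (G_E \<alpha> k) SN STE SX t)" "Inl ` SX t"]
  show ?thesis
    using \<open>0 < \<alpha>\<close> by simp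
qed

lemma tcw_G_le:
  assumes "0 < \<alpha>"
  shows "tcw (G_A \<alpha> \<union> G_B \<alpha> k) (G_E \<alpha> k) \<le> \<alpha> + 1"
proof -
  have "finite STE" and "finite SN" and "SN \<noteq> {}"
    unfolding star_TE_def star_N_def using finite_G_B by simp_all
  moreover have "card (adh (G_E \<alpha> k) SN STE SX e) \<le> \<alpha> + 1" if "e \<in> STE" for e
    using card_adh_G_star_le[OF that] assms by linarith
  ultimately have "tcw_width (G_E \<alpha> k) SN STE SX \<le> \<alpha> + 1"
    unfolding tcw_width_def using center_size_G_star_le[OF assms] by (simp add: Max_le_iff)
  with tcw_le_tcw_width[OF tcd_G_star] show ?thesis
    by simp
qed

end

lemma G_A_not_in_one_bag:
  assumes D: "tcd (G_A \<alpha> \<union> G_B \<alpha> k) E N TE X" and "thickness N X \<le> \<alpha>"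
  obtains i where "0 < i" and "i \<le> \<alpha>" and "node_of N X (2 * i) \<noteq> node_of N X 0"
proof -
  have "\<exists>i. 0 < i \<and> i \<le> \<alpha> \<and> node_of N X (2 * i) \<noteq> node_of N X 0"
  proof (rule ccontr)
    assume "\<nexists>i. 0 < i \<and> i \<le> \<alpha> \<and> node_of N X (2 * i) \<noteq> node_of N X 0"
    then have same_bag: "node_of N X (2 * i) = node_of N X 0" if "i \<le> \<alpha>" for i
      using that by (metis gr0I mult_0_right)
    let ?t = "node_of N X 0"
    have "0 \<in> G_A \<alpha> \<union> G_B \<alpha> k"
      using even_in_G_A[of 0] by simp
    then have "?t \<in> N"
      by (rule node_of_in(1)[OF D])
    have "X ?t \<subseteq> G_A \<alpha> \<union> G_B \<alpha> k"
      using D \<open>?t \<in> N\<close> unfolding tcd_def by blast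
    then have "finite (X ?t)"
      by (rule finite_subset) (simp add: finite_G_A finite_G_B)
    moreover have "G_A \<alpha> \<subseteq> X ?t"
    proof
      fix a assume "a \<in> G_A \<alpha>"
      then obtain i where "i \<le> \<alpha>" and "a = 2 * i"
        unfolding G_A_def by auto
      with node_of_in(2)[OF D, of a] show "a \<in> X ?t"
        using same_bag even_in_G_A by auto
    qed
    ultimately have "card (G_A \<alpha>) \<le> card (X ?t)"
      by (rule card_mono)
    also have "\<dots> \<le> \<alpha>"
      using card_bag_le_thickness[OF D \<open>?t \<in> N\<close>] \<open>thickness N X \<le> \<alpha>\<close> by simp
    finally show False
      using card_G_A by simp
  qed
  with that show thesis
    by blast
qed

text \<open>The \<open>k\<close> copies of \<open>({a\<^sub>0, a\<^sub>i}, l)\<close> are common neighbours of two vertices in distinct bags.\<close>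
lemma ecrw_G_ge:
  assumes "0 < \<alpha>"
  shows "k \<le> 2 * ecrw \<alpha> (G_A \<alpha> \<union> G_B \<alpha> k) (G_E \<alpha> k) + 2 * \<alpha>"
proof -
  let ?V = "G_A \<alpha> \<union> G_B \<alpha> k"
  have "finite ?V"
    using finite_G_A finite_G_B by simp
  then obtain N TE X where D: "tcd ?V (G_E \<alpha> k) N TE X" and "thickness N X \<le> \<alpha>"
    and ecrw: "ecrw \<alpha> ?V (G_E \<alpha> k) = crossing_number (G_E \<alpha> k) N TE X"
    using assms by (rule ecrw_attained)
  obtain i where "0 < i" and "i \<le> \<alpha>" and "node_of N X (2 * i) \<noteq> node_of N X 0"
    using G_A_not_in_one_bag[OF D \<open>thickness N X \<le> \<alpha>\<close>] by blast
  moreover have "0 \<in> ?V" and "2 * i \<in> ?V"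
    using even_in_G_A[of 0 \<alpha>] even_in_G_A[OF \<open>i \<le> \<alpha>\<close>] by simp_all
  moreover have "inj_on (pair_code 0 i) {..<k}"
    by (simp add: inj_on_def)
  moreover have "\<forall>l\<in>{..<k}. pair_code 0 i l \<in> ?V \<and> {0, pair_code 0 i l} \<in> G_E \<alpha> k
      \<and> {pair_code 0 i l, 2 * i} \<in> G_E \<alpha> k \<and> pair_code 0 i l \<noteq> 0 \<and> pair_code 0 i l \<noteq> 2 * i"
  proof
    fix l assume "l \<in> {..<k}"
    then have "{2 * 0, pair_code 0 i l} \<in> G_E \<alpha> k" and "{2 * i, pair_code 0 i l} \<in> G_E \<alpha> k"
      using \<open>0 < i\<close> \<open>i \<le> \<alpha>\<close> unfolding G_E_def by blast+
    moreover have "pair_code 0 i l \<in> ?V"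
      using \<open>l \<in> {..<k}\<close> \<open>0 < i\<close> \<open>i \<le> \<alpha>\<close> pair_code_in_G_B by simp
    moreover have "pair_code 0 i l \<noteq> 2 * 0" and "pair_code 0 i l \<noteq> 2 * i"
      by (rule pair_code_neq_even)+
    ultimately show "pair_code 0 i l \<in> ?V \<and> {0, pair_code 0 i l} \<in> G_E \<alpha> k
      \<and> {pair_code 0 i l, 2 * i} \<in> G_E \<alpha> k \<and> pair_code 0 i l \<noteq> 0 \<and> pair_code 0 i l \<noteq> 2 * i"
      by (simp add: insert_commute)
  qed
  ultimately have "card {..<k} \<le> 2 * crossing_number (G_E \<alpha> k) N TE X + 2 * \<alpha>"
    by (intro common_neighbours_le_crossing_number[OF D \<open>finite ?V\<close> finite_G_E \<open>thickness N X \<le> \<alpha>\<close>,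
          where a = 0 and b = "2 * i"]) auto
  then show ?thesis
    using ecrw by simp
qed

theorem lemma3p8:
  fixes \<alpha> :: nat
  assumes "\<alpha> > 0"
  shows "\<not> (\<exists>f :: nat \<Rightarrow> nat. \<forall>V E. graph V E \<longrightarrow> ecrw \<alpha> V E \<le> f (tcw V E))"
proof
  assume "\<exists>f :: nat \<Rightarrow> nat. \<forall>V E. graph V E \<longrightarrow> ecrw \<alpha> V E \<le> f (tcw V E)"
  then obtain f :: "nat \<Rightarrow> nat" where f: "\<And>V E. graph V E \<Longrightarrow> ecrw \<alpha> V E \<le> f (tcw V E)"
    by blast
  define M where "M = Max (f ` {..\<alpha> + 1})"
  define k where "k = 2 * M + 2 * \<alpha> + 1"
  have "f (tcw (G_A \<alpha> \<union> G_B \<alpha> k) (G_E \<alpha> k)) \<le> M"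
    unfolding M_def using tcw_G_le[OF assms] by simp
  with f[OF graph_G] have "ecrw \<alpha> (G_A \<alpha> \<union> G_B \<alpha> k) (G_E \<alpha> k) \<le> M"
    by (rule order_trans)
  with ecrw_G_ge[OF assms, of k] show False
    unfolding k_def by simp
qed

end
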